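(* Let $\mathcal{T}=(\mathbb{K}_i,\phi_i)_{i=0,\dots,m}$ be a tower with $\mathbb{K}_0=\emptyset$ whose maps are elementary inclusions or elementary contractions, of dimension $\Delta$, and let $\hat{\mathbb{K}}_m$ be the last complex of the active small coning construction. The conversion algorithm described below requires $O(\Delta\cdot\omega)$ space and $O(\Delta\cdot|\hat{\mathbb{K}}_m|\cdot C_\omega)$ time, where $\omega=\max_{i=0,\dots,m}|\mathbb{K}_i|$ and $C_\omega$ is the cost of an operation in a dictionary with at most $\omega$ elements.
   Context: Elementary inclusion: $\mathbb{K}_{i+1}=\mathbb{K}_i\cup\{\sigma\}$, $\sigma\notin\mathbb{K}_i$, $\phi_i$ the inclusion. Elementary contraction of distinct vertices $u,v$: for one of them, say $v$, vertex set of $\mathbb{K}_{i+1}$ is that of $\mathbb{K}_i$ minus $v$, $\phi_i(u)=\phi_i(v)=u$, identity elsewhere, $\mathbb{K}_{i+1}=\phi_i(\mathbb{K}_i)$. Active small coning construction: $\hat{\mathbb{K}}_0=\emptyset$, vertices flagged active/inactive, a simplex active iff all its vertices are; $\mathrm{Act}\overline{\mathrm{St}}(w,\hat{\mathbb{K}}_i)$ = active simplices of $\hat{\mathbb{K}}_i$ in the closed star of $w$; inclusion of $\sigma$ gives $\hat{\mathbb{K}}_{i+1}=\hat{\mathbb{K}}_i\cup\{\sigma\}$ (new vertices active); contraction of $u,v$ with $|\mathrm{Act}\overline{\mathrm{St}}(u,\hat{\mathbb{K}}_i)|\le|\mathrm{Act}\overline{\mathrm{St}}(v,\hat{\mathbb{K}}_i)|$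 gives $\hat{\mathbb{K}}_{i+1}=\hat{\mathbb{K}}_i\cup\{\{v\}\cup\tau:\tau\in\mathrm{Act}\overline{\mathrm{St}}(u,\hat{\mathbb{K}}_i)\}$ and marks $u$ inactive (symmetric otherwise). A dictionary stores items (key, value) with distinct keys and supports insert, delete, search. Conversion algorithm: the tower is read as a stream, each element being either (INCLUSION, vertex list of $\sigma$) or (CONTRACTION, $u$, $v$). The algorithm maintains a dictionary $D$ representing the current complex $\mathbb{K}_i$: each simplex is an item keyed by its vertex list, and each simplex $\sigma$ stores a dictionary of pointers to its cofacets $\tau$ keyed by the vertex $\tau\setminus\sigma$; inserting/deleting a simplex updates the cofacet dictionaries of its facets. On an inclusion of $\sigma$, it inserts $\sigma$ into $D$ and outputs $\sigma$. On a contraction of $u,v$, it compares $|\mathrm{St}(u)\setminus\mathrm{St}(v)|$ and $|\mathrm{St}(v)\setminus\mathrm{St}(u)|$ (stars in $\mathbb{K}_i$) by simultaneous cofacet traversals from $u$ and $v$ (skipping cofacets containing the other vertex), stopping when one traversal finishes; say the one for $u$ is not larger. It then lists $\mathrm{St}(u)\setminus\mathrm{St}(v)$ sorted by increasing dimension, and for each $\{u,v_1,\dots,v_k\}$ in this order, inserts $\{v,v_1,\dots,v_k\}$ into $D$ and outputs it if it is not already in $D$, and then outputs $\{u,v,v_1,\dots,v_k\}$. Finally it deletes all cofaces of $u$ from $D$. The output stream is the sequence of simplices of $\hat{\mathbb{K}}_{i+1}\setminus\hat{\mathbb{K}}_i$, $i=0,\dots,m-1$. *)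

theory Defs
  imports Complex_Main
begin

definition simplicial_complex :: "nat set set \<Rightarrow> bool" where
  "simplicial_complex K \<longleftrightarrow> finite K \<and>
     (\<forall>\<sigma>\<in>K. finite \<sigma> \<and> \<sigma> \<noteq> {}) \<and>
     (\<forall>\<sigma>\<in>K. \<forall>\<tau>. \<tau> \<subseteq> \<sigma> \<and> \<tau> \<noteq> {} \<longrightarrow> \<tau> \<in> K)"

definition vertices :: "nat set set \<Rightarrow> nat set" where
  "vertices K = \<Union>K"

text \<open>Stream elements. \<open>Contraction u v\<close>: the vertex \<open>v\<close> disappears and is
  identified with \<open>u\<close> (\<open>\<phi>(u) = \<phi>(v) = u\<close>).\<close>
datatype tower_op = Inclusion "nat set" | Contraction nat nat

definition contract :: "nat \<Rightarrow> nat \<Rightarrow> nat set set \<Rightarrow> nat set set" where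
  "contract u v K = (\<lambda>\<sigma>. if v \<in> \<sigma> then insert u (\<sigma> - {v}) else \<sigma>) ` K"

fun apply_op :: "nat set set \<Rightarrow> tower_op \<Rightarrow> nat set set" where
  "apply_op K (Inclusion \<sigma>) = insert \<sigma> K"
| "apply_op K (Contraction u v) = contract u v K"

text \<open>\<open>cplx ops i\<close> is \<open>K_i\<close>; \<open>K_0 = {}\<close>, \<open>m = length ops\<close>.\<close>
primrec cplx :: "tower_op list \<Rightarrow> nat \<Rightarrow> nat set set" where
  "cplx ops 0 = {}"
| "cplx ops (Suc i) = apply_op (cplx ops i) (ops ! i)"

fun elementary_op :: "nat set set \<Rightarrow> tower_op \<Rightarrow> bool" where
  "elementary_op K (Inclusion \<sigma>) \<longleftrightarrow> \<sigma> \<notin> K \<and> simplicial_complex (insert \<sigma> K)"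
| "elementary_op K (Contraction u v) \<longleftrightarrow> u \<noteq> v \<and> {u} \<in> K \<and> {v} \<in> K"

definition valid_tower :: "tower_op list \<Rightarrow> bool" where
  "valid_tower ops \<longleftrightarrow> (\<forall>i < length ops. elementary_op (cplx ops i) (ops ! i))"

definition tower_dim :: "tower_op list \<Rightarrow> nat" where
  "tower_dim ops = Max ({0} \<union> {card \<sigma> - 1 | \<sigma> i. i \<le> length ops \<and> \<sigma> \<in> cplx ops i})"

definition tower_width :: "tower_op list \<Rightarrow> nat" where
  "tower_width ops = Max {card (cplx ops i) | i. i \<le> length ops}"

text \<open>The vertices of \<open>\<hat>K_i\<close> are pairs (name, creation step), so that every newly
  included vertex is fresh. The map \<open>\<rho>\<close> sends each vertex of \<open>K_i\<close> to the active
  vertex of \<open>\<hat>K_i\<close> representing it; the active vertices are \<open>\<rho> ` vertices K_i\<close>.\<close>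

type_synonym cstate = "(nat \<times> nat) set set \<times> (nat \<Rightarrow> nat \<times> nat)"

definition act_clstar :: "(nat \<times> nat) set set \<Rightarrow> (nat \<times> nat) set \<Rightarrow> nat \<times> nat
    \<Rightarrow> (nat \<times> nat) set set" where
  "act_clstar Kh A w = {\<tau> \<in> Kh. insert w \<tau> \<in> Kh \<and> \<tau> \<subseteq> A}"

fun coning_step :: "cstate \<Rightarrow> nat set set \<Rightarrow> nat \<Rightarrow> tower_op \<Rightarrow> cstate" where
  "coning_step (Kh, \<rho>) K i (Inclusion \<sigma>) =
     (let \<rho>' = (\<lambda>w. if w \<in> \<sigma> \<and> w \<notin> vertices K then (w, i) else \<rho> w)
      in (insert (\<rho>' ` \<sigma>) Kh, \<rho>'))"
| "coning_step (Kh, \<rho>) K i (Contraction u v) =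
     (let a = \<rho> u; b = \<rho> v; A = \<rho> ` vertices K in
      if card (act_clstar Kh A a) \<le> card (act_clstar Kh A b)
      then (Kh \<union> {insert b \<tau> | \<tau>. \<tau> \<in> act_clstar Kh A a}, \<rho>(u := b))
      else (Kh \<union> {insert a \<tau> | \<tau>. \<tau> \<in> act_clstar Kh A b}, \<rho>))"

primrec coning :: "tower_op list \<Rightarrow> nat \<Rightarrow> cstate" where
  "coning ops 0 = ({}, \<lambda>w. (w, 0))"
| "coning ops (Suc i) = coning_step (coning ops i) (cplx ops i) i (ops ! i)"

definition khat_last :: "tower_op list \<Rightarrow> (nat \<times> nat) set set" where
  "khat_last ops = fst (coning ops (length ops))"

text \<open>The dictionary \<open>D\<close> before step \<open>i\<close> represents \<open>K_i\<close> (up to renaming of the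
  surviving vertex of a contraction, which does not affect any cost); costs are
  therefore expressed in terms of \<open>K_i\<close>. We count separately elementary (constant
  time) operations and dictionary operations (insert/delete/search, each of cost
  \<open>C\<close>). Every dictionary item occupies constant space plus its key.\<close>

definition cof_count :: "nat set set \<Rightarrow> nat set \<Rightarrow> nat" where
  "cof_count K \<sigma> = card {\<tau> \<in> K. \<sigma> \<subseteq> \<tau> \<and> card \<tau> = Suc (card \<sigma>)}"

definition star_diff :: "nat set set \<Rightarrow> nat \<Rightarrow> nat \<Rightarrow> nat set set" where
  "star_diff K x y = {\<sigma> \<in> K. x \<in> \<sigma> \<and> y \<notin> \<sigma>}"

definition cofaces :: "nat set set \<Rightarrow> nat \<Rightarrow> nat set set" where
  "cofaces K x = {\<sigma> \<in> K. x \<in> \<sigma>}"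

text \<open>Number of cofacet-dictionary entries examined when traversing the set \<open>S\<close>.\<close>
definition entries :: "nat set set \<Rightarrow> nat set set \<Rightarrow> nat" where
  "entries K S = (\<Sum>\<sigma>\<in>S. cof_count K \<sigma>)"

text \<open>The vertex removed from \<open>D\<close> (the one with the smaller star difference) and
  the surviving one.\<close>
definition small_big :: "nat set set \<Rightarrow> nat \<Rightarrow> nat \<Rightarrow> nat \<times> nat" where
  "small_big K u v = (if card (star_diff K u v) \<le> card (star_diff K v u) then (u, v) else (v, u))"

definition new_part :: "nat set set \<Rightarrow> nat \<Rightarrow> nat \<Rightarrow> nat set set" where
  "new_part K x y = {\<sigma> \<in> star_diff K x y. insert y (\<sigma> - {x}) \<notin> K}"

text \<open>Elementary operations of one step:
  Inclusion: read and output the vertex list, create the empty cofacet dictionary.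
  Contraction: read the input; simultaneous traversal (both sides examine at most as
  many entries as the smaller side, one constant-time check each); bucket sort by
  dimension; output of the new simplices; traversal of the cofaces of the removed
  vertex.\<close>
fun step_elem :: "nat set set \<Rightarrow> tower_op \<Rightarrow> nat" where
  "step_elem K (Inclusion \<sigma>) = 2 * card \<sigma> + 1"
| "step_elem K (Contraction u v) =
     (let (x, y) = small_big K u v; S = star_diff K x y; N = new_part K x y in
      2 + 2 * entries K S + (card S + Max (insert 0 (card ` S)))
        + (\<Sum>\<sigma>\<in>N. card \<sigma>) + (\<Sum>\<sigma>\<in>S. card \<sigma> + 1)
        + entries K (cofaces K x) + 1)"

text \<open>Dictionary operations of one step:
  Inclusion: translation of the input vertex names, insertion of \<open>\<sigma>\<close>, and for every
  facet a search and an insertion into its cofacet dictionary.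
  Contraction: translation of \<open>u, v\<close>; per examined entry a search and an insertion in
  the visited-dictionary (both traversals); per element of the star difference a
  search, and for new simplices insertion plus facet updates; for the deletion of
  the cofaces of the removed vertex the traversal and per simplex a deletion plus
  facet updates.\<close>
fun step_dict :: "nat set set \<Rightarrow> tower_op \<Rightarrow> nat" where
  "step_dict K (Inclusion \<sigma>) = card \<sigma> + 1 + (if card \<sigma> \<ge> 2 then 2 * card \<sigma> else 0)"
| "step_dict K (Contraction u v) =
     (let (x, y) = small_big K u v; S = star_diff K x y; N = new_part K x y in
      2 + 4 * entries K S + card S + (\<Sum>\<sigma>\<in>N. 1 + 2 * card \<sigma>)
        + 2 * entries K (cofaces K x) + (\<Sum>\<sigma>\<in>cofaces K x. 1 + 2 * card \<sigma>))"

text \<open>Space of a dictionary holding the complex \<open>K'\<close>: each simplex with its vertex list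
  and its cofacet dictionary.\<close>
definition dspace :: "nat set set \<Rightarrow> nat" where
  "dspace K' = (\<Sum>\<sigma>\<in>K'. card \<sigma> + 1 + cof_count K' \<sigma>)"

text \<open>Peak space during one step (for a contraction: \<open>D\<close> before the deletions, the
  visited-dictionary and the sorted list of the star difference).\<close>
fun step_space :: "nat set set \<Rightarrow> tower_op \<Rightarrow> nat" where
  "step_space K (Inclusion \<sigma>) = dspace (insert \<sigma> K)"
| "step_space K (Contraction u v) =
     (let (x, y) = small_big K u v; S = star_diff K x y; N = new_part K x y in
      dspace (K \<union> (\<lambda>\<sigma>. insert y (\<sigma> - {x})) ` N) + card K + (\<Sum>\<sigma>\<in>S. card \<sigma> + 1))"

definition alg_space :: "tower_op list \<Rightarrow> nat" where
  "alg_space ops = Max ({0} \<union> {step_space (cplx ops i) (ops ! i) | i. i < length ops})"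

definition alg_time :: "real \<Rightarrow> tower_op list \<Rightarrow> real" where
  "alg_time C ops = (\<Sum>i<length ops. real (step_elem (cplx ops i) (ops ! i))
                                      + C * real (step_dict (cplx ops i) (ops ! i)))"

end

theory Submission
  imports Defs
begin

text \<open>The space bound holds step by step: the dictionary stores each simplex of \<open>K_i\<close> (together
  with at most \<open>|K_i|\<close> newly inserted ones) with its vertex list and at most \<open>\<Delta> + 1\<close> cofacet
  entries. For the time bound, an inclusion costs \<open>O(\<Delta>)\<close> and adds one simplex to \<open>K\<close> and to
  \<open>\<hat>K\<close>. A contraction removing the vertex \<open>x\<close> costs \<open>O(\<Delta> f)\<close>, \<open>f\<close> the number of cofaces of
  \<open>x\<close>, since every traversal stays inside the star of \<open>x\<close>. The simplices of \<open>St(x) - St(y)\<close> whose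
  contraction already lies in \<open>K_i\<close> correspond bijectively to those of \<open>St(y) - St(x)\<close>, so the
  removed vertex also has the fewer genuinely new simplices, say \<open>N\<close>. Whichever vertex the coning
  cones off, it therefore adds at least \<open>N\<close> simplices to \<open>\<hat>K\<close>, while
  \<open>|K_{i+1}| \<le> |K_i| + N - f\<close>. With the potential \<open>34 |\<hat>K_i| - 27 |K_i|\<close> every step is paid
  for, and the final potential is at most \<open>34 |\<hat>K_m|\<close>.\<close>

lemma simplicial_complex_finite: "simplicial_complex K \<Longrightarrow> finite K"
  unfolding simplicial_complex_def by blast

lemma simplicial_complex_simplex_finite: "simplicial_complex K \<Longrightarrow> \<sigma> \<in> K \<Longrightarrow> finite \<sigma>"
  unfolding simplicial_complex_def by blast

lemma simplicial_complex_face: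
  "simplicial_complex K \<Longrightarrow> \<sigma> \<in> K \<Longrightarrow> \<tau> \<subseteq> \<sigma> \<Longrightarrow> \<tau> \<noteq> {} \<Longrightarrow> \<tau> \<in> K"
  unfolding simplicial_complex_def by blast

lemma simplex_subset_vertices: "\<sigma> \<in> K \<Longrightarrow> \<sigma> \<subseteq> vertices K"
  unfolding vertices_def by auto

lemma singleton_in_complex:
  assumes "simplicial_complex K" "w \<in> vertices K"
  shows "{w} \<in> K"
  using assms simplicial_complex_face unfolding vertices_def by blast

lemma simplicial_complex_contract:
  assumes sc: "simplicial_complex K"
  shows "simplicial_complex (contract u v K)"
proof -
  let ?f = "\<lambda>\<sigma>. if v \<in> \<sigma> then insert u (\<sigma> - {v}) else \<sigma>"
  have "\<tau> \<in> ?f ` K" if \<sigma>: "\<sigma> \<in> K" and \<tau>: "\<tau> \<subseteq> ?f \<sigma>" "\<tau> \<noteq> {}" for \<sigma> \<tau>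
  proof (cases "u \<in> \<tau> \<and> v \<in> \<sigma>")
    case True
    let ?\<tau>' = "insert v (\<tau> - {u})"
    have "?\<tau>' \<subseteq> \<sigma>" using True \<tau> by auto
    then have "?\<tau>' \<in> K" using simplicial_complex_face[OF sc \<sigma>] by simp
    have "v \<notin> \<tau> \<or> u = v" using True \<tau> by auto
    then have "\<tau> = ?f ?\<tau>'" using True by auto
    then show ?thesis using \<open>?\<tau>' \<in> K\<close> by (rule image_eqI)
  next
    case False
    then have "\<tau> \<subseteq> \<sigma>" "v \<notin> \<tau>" using \<tau> by (auto split: if_splits)
    then have "\<tau> = ?f \<tau>" "\<tau> \<in> K" using simplicial_complex_face[OF sc \<sigma> _ \<tau>(2)] by simp_all
    then show ?thesis by (rule image_eqI)
  qed
  then have "\<forall>\<sigma>\<in>?f ` K. \<forall>\<tau>. \<tau> \<subseteq> \<sigma> \<and> \<tau> \<noteq> {} \<longrightarrow> \<tau> \<in> ?f ` K" by blast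
  moreover have "finite (?f ` K)" "\<forall>\<sigma>\<in>?f ` K. finite \<sigma> \<and> \<sigma> \<noteq> {}"
    using sc unfolding simplicial_complex_def by auto
  ultimately show ?thesis unfolding simplicial_complex_def contract_def by blast
qed

lemma vertices_contract:
  assumes "simplicial_complex K" "{u} \<in> K" "u \<noteq> v"
  shows "vertices (contract u v K) = vertices K - {v}"
proof
  show "vertices (contract u v K) \<subseteq> vertices K - {v}"
    using assms unfolding vertices_def contract_def by (auto split: if_splits)
  show "vertices K - {v} \<subseteq> vertices (contract u v K)"
  proof
    fix w assume w: "w \<in> vertices K - {v}"
    then have "{w} = (if v \<in> {w} then insert u ({w} - {v}) else {w})" "{w} \<in> K"
      using singleton_in_complex[OF assms(1)] by auto
    then have "{w} \<in> contract u v K" unfolding contract_def by (rule image_eqI)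
    then show "w \<in> vertices (contract u v K)" unfolding vertices_def by auto
  qed
qed

lemma elementary_inclusion_cases:
  assumes "\<sigma> \<notin> K" "simplicial_complex (insert \<sigma> K)"
  obtains "\<sigma> \<subseteq> vertices K" | w where "\<sigma> = {w}" "w \<notin> vertices K"
proof (cases "\<sigma> \<subseteq> vertices K")
  case True
  then show ?thesis using that by blast
next
  case False
  then obtain w where w: "w \<in> \<sigma>" "w \<notin> vertices K" by auto
  then have "{w} \<in> insert \<sigma> K" using assms(2) simplicial_complex_face by blast
  moreover have "{w} \<notin> K" using w unfolding vertices_def by auto
  ultimately show ?thesis using that w by auto
qed

lemma simplicial_complex_cplx:
  assumes "valid_tower ops" "i \<le> length ops"
  shows "simplicial_complex (cplx ops i)"
  using assms(2)
proof (induction i)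
  case 0
  then show ?case by (simp add: simplicial_complex_def)
next
  case (Suc i)
  then have "elementary_op (cplx ops i) (ops ! i)" "simplicial_complex (cplx ops i)"
    using assms(1) unfolding valid_tower_def by auto
  then show ?case by (cases "ops ! i") (auto simp: simplicial_complex_contract)
qed

section \<open>The invariant of the active small coning\<close>

text \<open>The active subcomplex of \<open>\<hat>K_i\<close> is the copy \<open>\<rho> ` K_i\<close> of \<open>K_i\<close>, and every vertex of
  \<open>\<hat>K_i\<close> was created before step \<open>i\<close>.\<close>
definition coning_invariant ::
    "nat set set \<Rightarrow> (nat \<times> nat) set set \<Rightarrow> (nat \<Rightarrow> nat \<times> nat) \<Rightarrow> nat \<Rightarrow> bool" where
  "coning_invariant K Kh \<rho> i \<longleftrightarrow> simplicial_complex K \<and> finite Kh \<and> inj_on \<rho> (vertices K) \<and>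
     {\<tau>\<in>Kh. \<tau> \<subseteq> \<rho> ` vertices K} = (\<lambda>\<sigma>. \<rho> ` \<sigma>) ` K \<and> (\<forall>\<tau>\<in>Kh. \<forall>p\<in>\<tau>. snd p < i)"

context
  fixes K Kh \<rho> i
  assumes inv: "coning_invariant K Kh \<rho> i"
begin

lemma coning_invariant_simplicial_complex: "simplicial_complex K"
  and coning_invariant_finite: "finite Kh"
  and coning_invariant_inj_on: "inj_on \<rho> (vertices K)"
  and coning_invariant_active: "{\<tau>\<in>Kh. \<tau> \<subseteq> \<rho> ` vertices K} = (\<lambda>\<sigma>. \<rho> ` \<sigma>) ` K"
  and coning_invariant_stamp: "\<tau> \<in> Kh \<Longrightarrow> p \<in> \<tau> \<Longrightarrow> snd p < i"
  using inv unfolding coning_invariant_def by auto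

lemma coning_invariant_image_mem: "\<sigma> \<in> K \<Longrightarrow> \<rho> ` \<sigma> \<in> Kh"
  using coning_invariant_active by (metis (no_types, lifting) image_eqI mem_Collect_eq)

lemma coning_invariant_active_preimage:
  assumes "\<tau> \<in> Kh" "\<tau> \<subseteq> \<rho> ` vertices K"
  obtains \<sigma> where "\<sigma> \<in> K" "\<tau> = \<rho> ` \<sigma>"
proof -
  have "\<tau> \<in> (\<lambda>\<sigma>. \<rho> ` \<sigma>) ` K" using assms coning_invariant_active by (metis (no_types, lifting) mem_Collect_eq)
  then show ?thesis using that by (auto simp del: image_ident)
qed

lemma coning_invariant_image_eq_iff:
  "\<sigma>\<^sub>1 \<subseteq> vertices K \<Longrightarrow> \<sigma>\<^sub>2 \<subseteq> vertices K \<Longrightarrow> \<rho> ` \<sigma>\<^sub>1 = \<rho> ` \<sigma>\<^sub>2 \<longleftrightarrow> \<sigma>\<^sub>1 = \<sigma>\<^sub>2"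
  using coning_invariant_inj_on inj_on_image_eq_iff by metis

lemma coning_invariant_stamp_less:
  assumes "w \<in> vertices K"
  shows "snd (\<rho> w) < i"
proof -
  have "{w} \<in> K" using coning_invariant_simplicial_complex assms by (rule singleton_in_complex)
  then have "{\<rho> w} \<in> Kh" using coning_invariant_image_mem[of "{w}"] by simp
  then show ?thesis using coning_invariant_stamp by blast
qed

lemma coning_invariant_cong:
  assumes "\<And>w. w \<in> vertices K \<Longrightarrow> \<rho>' w = \<rho> w"
  shows "coning_invariant K Kh \<rho>' i"
proof -
  have img: "\<rho>' ` \<sigma> = \<rho> ` \<sigma>" if "\<sigma> \<subseteq> vertices K" for \<sigma>
    using that assms by (simp add: subset_iff)
  have "(\<lambda>\<sigma>. \<rho>' ` \<sigma>) ` K = (\<lambda>\<sigma>. \<rho> ` \<sigma>) ` K"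
    by (rule image_cong[OF refl img[OF simplex_subset_vertices]])
  moreover have "inj_on \<rho>' (vertices K)"
    using inj_on_cong[of "vertices K" \<rho>' \<rho>] assms coning_invariant_inj_on by blast
  ultimately show ?thesis
    using inv img[OF order_refl] unfolding coning_invariant_def by simp
qed

lemma coning_invariant_insert_face:
  assumes "\<sigma> \<notin> K" "simplicial_complex (insert \<sigma> K)" "\<sigma> \<subseteq> vertices K"
  shows "coning_invariant (insert \<sigma> K) (insert (\<rho> ` \<sigma>) Kh) \<rho> (Suc i)" and "\<rho> ` \<sigma> \<notin> Kh"
proof -
  show "\<rho> ` \<sigma> \<notin> Kh"
  proof
    assume "\<rho> ` \<sigma> \<in> Kh"
    moreover have "\<rho> ` \<sigma> \<subseteq> \<rho> ` vertices K" using assms(3) by auto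
    ultimately obtain \<sigma>' where "\<sigma>' \<in> K" "\<rho> ` \<sigma> = \<rho> ` \<sigma>'"
      by (rule coning_invariant_active_preimage)
    moreover have "\<sigma>' \<subseteq> vertices K" using \<open>\<sigma>' \<in> K\<close> by (rule simplex_subset_vertices)
    ultimately have "\<sigma> = \<sigma>'" using coning_invariant_image_eq_iff assms(3) by blast
    then show False using \<open>\<sigma>' \<in> K\<close> assms(1) by simp
  qed
  have "vertices (insert \<sigma> K) = vertices K" using assms(3) unfolding vertices_def by auto
  moreover have "{\<tau> \<in> insert (\<rho> ` \<sigma>) Kh. \<tau> \<subseteq> \<rho> ` vertices K}
      = insert (\<rho> ` \<sigma>) {\<tau>\<in>Kh. \<tau> \<subseteq> \<rho> ` vertices K}"
    using assms(3) by auto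
  moreover have "\<forall>\<tau>\<in>insert (\<rho> ` \<sigma>) Kh. \<forall>p\<in>\<tau>. snd p < Suc i"
    using assms(3) coning_invariant_stamp_less coning_invariant_stamp less_SucI by blast
  ultimately show "coning_invariant (insert \<sigma> K) (insert (\<rho> ` \<sigma>) Kh) \<rho> (Suc i)"
    using assms(2) coning_invariant_finite coning_invariant_inj_on coning_invariant_active
    unfolding coning_invariant_def by simp
qed

lemma coning_invariant_insert_vertex:
  assumes w: "w \<notin> vertices K" and sc: "simplicial_complex (insert {w} K)"
  shows "coning_invariant (insert {w} K) (insert {(w, i)} Kh) (\<rho>(w := (w, i))) (Suc i)"
    and "{(w, i)} \<notin> Kh"
proof -
  let ?\<rho>' = "\<rho>(w := (w, i))"
  have fresh: "(w, i) \<notin> \<tau>" if "\<tau> \<in> Kh" for \<tau>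
    using that coning_invariant_stamp by fastforce
  then show "{(w, i)} \<notin> Kh" by blast
  have inv': "coning_invariant K Kh ?\<rho>' i"
    using w by (intro coning_invariant_cong) auto
  have "(w, i) \<notin> \<rho> ` vertices K"
  proof
    assume "(w, i) \<in> \<rho> ` vertices K"
    then obtain x where x: "(w, i) = \<rho> x" "x \<in> vertices K" by (rule imageE)
    have "snd (\<rho> x) < i" using x(2) by (rule coning_invariant_stamp_less)
    then show False unfolding x(1)[symmetric] by simp
  qed
  moreover have "?\<rho>' ` vertices K = \<rho> ` vertices K" using w by auto
  ultimately have "(w, i) \<notin> ?\<rho>' ` vertices K" by simp
  then have "inj_on ?\<rho>' (insert w (vertices K))"
    using inv' w unfolding coning_invariant_def by simp
  moreover have "{\<tau> \<in> insert {(w, i)} Kh. \<tau> \<subseteq> ?\<rho>' ` insert w (vertices K)}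
      = insert {(w, i)} {\<tau>\<in>Kh. \<tau> \<subseteq> ?\<rho>' ` vertices K}"
    using fresh by auto
  moreover have "vertices (insert {w} K) = insert w (vertices K)" unfolding vertices_def by auto
  ultimately show "coning_invariant (insert {w} K) (insert {(w, i)} Kh) ?\<rho>' (Suc i)"
    using inv' sc unfolding coning_invariant_def by (auto simp: less_Suc_eq)
qed

end

lemma contract_eq_deletion_Un_cone:
  assumes sc: "simplicial_complex K" and "{y} \<in> K" "x \<noteq> y"
  shows "contract y x K = {\<sigma>\<in>K. x \<notin> \<sigma>} \<union> insert y ` {\<sigma>\<in>K. x \<notin> \<sigma> \<and> insert x \<sigma> \<in> K}"
    (is "_ = ?L")
proof
  show "contract y x K \<subseteq> ?L"
  proof
    fix \<tau> assume "\<tau> \<in> contract y x K"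
    then obtain \<sigma> where \<sigma>: "\<sigma> \<in> K" "\<tau> = (if x \<in> \<sigma> then insert y (\<sigma> - {x}) else \<sigma>)"
      unfolding contract_def by blast
    consider "x \<notin> \<sigma>" | "\<sigma> = {x}" | "x \<in> \<sigma>" "\<sigma> - {x} \<noteq> {}" by auto
    then show "\<tau> \<in> ?L"
    proof cases
      case 1
      then show ?thesis using \<sigma> by simp
    next
      case 2
      then show ?thesis using \<sigma> assms(2,3) by simp
    next
      case 3
      have "\<sigma> - {x} \<in> K" using simplicial_complex_face[OF sc \<sigma>(1) Diff_subset 3(2)] .
      moreover have "insert x (\<sigma> - {x}) \<in> K" using 3(1) \<sigma>(1) by (simp add: insert_absorb)
      ultimately have "\<sigma> - {x} \<in> {\<sigma>\<in>K. x \<notin> \<sigma> \<and> insert x \<sigma> \<in> K}" by simp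
      moreover have "\<tau> = insert y (\<sigma> - {x})" using \<sigma>(2) 3 by simp
      ultimately show ?thesis by blast
    qed
  qed
  show "?L \<subseteq> contract y x K"
  proof
    fix \<tau> assume "\<tau> \<in> ?L"
    then consider "\<tau> \<in> K" "x \<notin> \<tau>" | \<sigma> where "\<sigma> \<in> K" "x \<notin> \<sigma>" "insert x \<sigma> \<in> K" "\<tau> = insert y \<sigma>"
      by blast
    then show "\<tau> \<in> contract y x K"
    proof cases
      case 1
      then have "\<tau> = (if x \<in> \<tau> then insert y (\<tau> - {x}) else \<tau>)" by simp
      then show ?thesis unfolding contract_def using 1(1) by (rule image_eqI)
    next
      case (2 \<sigma>)
      then have "\<tau> = (if x \<in> insert x \<sigma> then insert y (insert x \<sigma> - {x}) else insert x \<sigma>)" by simp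
      then show ?thesis unfolding contract_def using 2(3) by (rule image_eqI)
    qed
  qed
qed

text \<open>One contraction step of the coning: the active closed star of \<open>\<rho> x\<close> is coned off with
  apex \<open>\<rho> y\<close>, where \<open>{x, y} = {u, v}\<close>; the tower keeps \<open>u\<close> as the name of the merged vertex,
  which the coning represents by \<open>\<rho> y\<close>.\<close>
locale coning_contraction =
  fixes K :: "nat set set" and Kh Kh' :: "(nat \<times> nat) set set" and \<rho> \<rho>' :: "nat \<Rightarrow> nat \<times> nat"
    and i u v x y :: nat
  assumes inv: "coning_invariant K Kh \<rho> i"
    and uv: "u \<noteq> v" "{u} \<in> K" "{v} \<in> K"
    and xy: "(x = u \<and> y = v) \<or> (x = v \<and> y = u)"
    and Kh': "Kh' = Kh \<union> insert (\<rho> y) ` act_clstar Kh (\<rho> ` vertices K) (\<rho> x)"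
    and \<rho>': "\<And>w. w \<in> vertices K - {v} \<Longrightarrow> \<rho>' w = (if w = u then \<rho> y else \<rho> w)"
begin

lemma simplicial: "simplicial_complex K"
  using inv by (rule coning_invariant_simplicial_complex)

lemma x_neq_y: "x \<noteq> y" and x_vertex: "x \<in> vertices K" and y_vertex: "y \<in> vertices K"
  and y_singleton: "{y} \<in> K" and uv_eq_xy: "{u, v} = {x, y}"
  using uv xy unfolding vertices_def by auto

lemma rho_x_mem_image_iff: "s \<subseteq> vertices K \<Longrightarrow> \<rho> x \<in> \<rho> ` s \<longleftrightarrow> x \<in> s"
  using coning_invariant_inj_on[OF inv] x_vertex by (auto dest: inj_onD)

lemma rho'_eq_rho: "s \<subseteq> vertices K - {u, v} \<Longrightarrow> \<rho>' ` s = \<rho> ` s"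
  using \<rho>' by (intro image_cong) (auto simp: subset_iff)

lemma rho'_u: "\<rho>' u = \<rho> y"
proof -
  have "u \<in> vertices K - {v}" using uv unfolding vertices_def by blast
  then show ?thesis using \<rho>' by simp
qed

lemma vertices_contract_eq: "vertices (contract u v K) = insert u (vertices K - {u, v})"
  using vertices_contract[OF simplicial uv(2,1)] uv unfolding vertices_def by auto

lemma active_vertices_contract: "\<rho>' ` vertices (contract u v K) = \<rho> ` vertices K - {\<rho> x}"
proof -
  have "\<rho> ` vertices K - {\<rho> x} = \<rho> ` (vertices K - {x})"
    using inj_on_image_set_diff[OF coning_invariant_inj_on[OF inv]] x_vertex by auto
  also have "vertices K - {x} = insert y (vertices K - {u, v})"
    using uv_eq_xy y_vertex x_neq_y by auto
  finally show ?thesis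
    unfolding vertices_contract_eq using rho'_u rho'_eq_rho by simp
qed

lemma inj_on_contract: "inj_on \<rho>' (vertices (contract u v K))"
proof -
  have inj: "inj_on \<rho> (vertices K)" by (rule coning_invariant_inj_on[OF inv])
  then have "inj_on \<rho> (vertices K - {u, v})" by (rule inj_on_subset) blast
  moreover have "\<rho>' w = \<rho> w" if "w \<in> vertices K - {u, v}" for w
    using that \<rho>' by auto
  ultimately have "inj_on \<rho>' (vertices K - {u, v})" using inj_on_cong by blast
  moreover have "\<rho> y \<notin> \<rho> ` (vertices K - {u, v})"
    using inj y_vertex uv_eq_xy by (auto dest: inj_onD)
  ultimately show ?thesis
    unfolding vertices_contract_eq using rho'_u rho'_eq_rho by simp
qed

lemma image_contract: "(\<lambda>\<sigma>. \<rho>' ` \<sigma>) ` contract u v K = (\<lambda>\<sigma>. \<rho> ` \<sigma>) ` contract y x K"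
proof -
  have "\<rho>' ` (if v \<in> \<sigma> then insert u (\<sigma> - {v}) else \<sigma>) = \<rho> ` (if x \<in> \<sigma> then insert y (\<sigma> - {x}) else \<sigma>)"
    if "\<sigma> \<in> K" for \<sigma>
  proof (cases "\<sigma> \<inter> {u, v} = {}")
    case True
    moreover have "\<sigma> \<subseteq> vertices K - {u, v}" using True simplex_subset_vertices[OF that] by blast
    ultimately show ?thesis using rho'_eq_rho uv_eq_xy by auto
  next
    case False
    have "\<sigma> - {u, v} \<subseteq> vertices K - {u, v}" using simplex_subset_vertices[OF that] by blast
    then have "\<rho>' ` insert u (\<sigma> - {u, v}) = \<rho> ` insert y (\<sigma> - {u, v})"
      using rho'_u rho'_eq_rho by simp
    moreover have "(if v \<in> \<sigma> then insert u (\<sigma> - {v}) else \<sigma>) = insert u (\<sigma> - {u, v})"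
      using False by auto
    moreover have "(if x \<in> \<sigma> then insert y (\<sigma> - {x}) else \<sigma>) = insert y (\<sigma> - {u, v})"
      using False uv_eq_xy by auto
    ultimately show ?thesis by simp
  qed
  then show ?thesis unfolding contract_def image_image by (rule image_cong[OF refl])
qed

lemma rho_x_neq_rho_y: "\<rho> x \<noteq> \<rho> y"
  using inj_onD[OF coning_invariant_inj_on[OF inv]] x_vertex y_vertex x_neq_y by blast

lemma link_image_mem_act_clstar:
  assumes "\<sigma> \<in> K" "insert x \<sigma> \<in> K"
  shows "\<rho> ` \<sigma> \<in> act_clstar Kh (\<rho> ` vertices K) (\<rho> x)"
  using coning_invariant_image_mem[OF inv assms(1)] coning_invariant_image_mem[OF inv assms(2)]
    simplex_subset_vertices[OF assms(1)] unfolding act_clstar_def by auto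

lemma contract_image_subset_active:
  "(\<lambda>\<sigma>. \<rho> ` \<sigma>) ` contract y x K \<subseteq> {\<tau>\<in>Kh'. \<tau> \<subseteq> \<rho> ` vertices K - {\<rho> x}}"
proof
  fix \<tau> assume "\<tau> \<in> (\<lambda>\<sigma>. \<rho> ` \<sigma>) ` contract y x K"
  then consider \<sigma> where "\<sigma> \<in> K" "x \<notin> \<sigma>" "\<tau> = \<rho> ` \<sigma>"
    | \<sigma> where "\<sigma> \<in> K" "x \<notin> \<sigma>" "insert x \<sigma> \<in> K" "\<tau> = insert (\<rho> y) (\<rho> ` \<sigma>)"
    unfolding contract_eq_deletion_Un_cone[OF simplicial y_singleton x_neq_y] by auto
  then show "\<tau> \<in> {\<tau>\<in>Kh'. \<tau> \<subseteq> \<rho> ` vertices K - {\<rho> x}}"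
  proof cases
    case (1 \<sigma>)
    then have "\<tau> \<in> Kh'" using Kh' coning_invariant_image_mem[OF inv] by blast
    moreover have "\<rho> x \<notin> \<tau>" using 1 rho_x_mem_image_iff[OF simplex_subset_vertices] by blast
    moreover have "\<tau> \<subseteq> \<rho> ` vertices K" using 1 simplex_subset_vertices by blast
    ultimately show ?thesis by blast
  next
    case (2 \<sigma>)
    then have "\<tau> \<in> Kh'" using Kh' link_image_mem_act_clstar by blast
    moreover have "\<rho> x \<notin> \<rho> ` \<sigma>" using 2 rho_x_mem_image_iff[OF simplex_subset_vertices] by blast
    ultimately show ?thesis
      using 2 rho_x_neq_rho_y y_vertex simplex_subset_vertices[of \<sigma> K] by auto
  qed
qed

lemma active_subset_contract_image:
  "{\<tau>\<in>Kh'. \<tau> \<subseteq> \<rho> ` vertices K - {\<rho> x}} \<subseteq> (\<lambda>\<sigma>. \<rho> ` \<sigma>) ` contract y x K"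
proof
  fix \<tau> assume \<tau>: "\<tau> \<in> {\<tau>\<in>Kh'. \<tau> \<subseteq> \<rho> ` vertices K - {\<rho> x}}"
  then consider "\<tau> \<in> Kh" | \<tau>' where "\<tau>' \<in> act_clstar Kh (\<rho> ` vertices K) (\<rho> x)" "\<tau> = insert (\<rho> y) \<tau>'"
    using Kh' by blast
  then show "\<tau> \<in> (\<lambda>\<sigma>. \<rho> ` \<sigma>) ` contract y x K"
  proof cases
    case 1
    then obtain \<sigma> where \<sigma>: "\<sigma> \<in> K" "\<tau> = \<rho> ` \<sigma>"
      using \<tau> coning_invariant_active_preimage[OF inv] by blast
    then have "x \<notin> \<sigma>" using \<tau> rho_x_mem_image_iff[OF simplex_subset_vertices] by blast
    then show ?thesis unfolding contract_eq_deletion_Un_cone[OF simplicial y_singleton x_neq_y] using \<sigma> by blast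
  next
    case (2 \<tau>')
    then have \<tau>': "\<tau>' \<in> Kh" "insert (\<rho> x) \<tau>' \<in> Kh" "\<tau>' \<subseteq> \<rho> ` vertices K"
      unfolding act_clstar_def by auto
    obtain \<sigma> where \<sigma>: "\<sigma> \<in> K" "\<tau>' = \<rho> ` \<sigma>"
      using \<tau>'(1,3) coning_invariant_active_preimage[OF inv] by blast
    have "x \<notin> \<sigma>" using \<tau> 2 \<sigma> rho_x_mem_image_iff[OF simplex_subset_vertices] by blast
    obtain \<sigma>' where \<sigma>': "\<sigma>' \<in> K" "insert (\<rho> x) \<tau>' = \<rho> ` \<sigma>'"
      using \<tau>' x_vertex coning_invariant_active_preimage[OF inv] by blast
    have "insert x \<sigma> \<subseteq> vertices K" using \<sigma>(1) x_vertex simplex_subset_vertices by blast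
    then have "\<sigma>' = insert x \<sigma>"
      using \<sigma> \<sigma>' coning_invariant_image_eq_iff[OF inv] simplex_subset_vertices by (metis image_insert)
    then have "insert y \<sigma> \<in> contract y x K"
      unfolding contract_eq_deletion_Un_cone[OF simplicial y_singleton x_neq_y] using \<sigma> \<sigma>' \<open>x \<notin> \<sigma>\<close> by blast
    moreover have "\<tau> = \<rho> ` insert y \<sigma>" using 2 \<sigma> by simp
    ultimately show ?thesis by blast
  qed
qed

lemma finite_Kh': "finite Kh'"
  using Kh' coning_invariant_finite[OF inv] unfolding act_clstar_def by simp

lemma stamp_Kh':
  assumes "\<tau> \<in> Kh'" "p \<in> \<tau>"
  shows "snd p < Suc i"
proof -
  have "snd p < i"
  proof (cases "\<tau> \<in> Kh")
    case True
    then show ?thesis using assms(2) by (rule coning_invariant_stamp[OF inv])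
  next
    case False
    then obtain \<tau>' where "\<tau>' \<in> Kh" "\<tau> = insert (\<rho> y) \<tau>'"
      using assms(1) Kh' unfolding act_clstar_def by blast
    then show ?thesis
      using assms(2) coning_invariant_stamp[OF inv] coning_invariant_stamp_less[OF inv y_vertex]
      by (metis insert_iff)
  qed
  then show ?thesis by simp
qed

lemma coning_invariant_contract: "coning_invariant (contract u v K) Kh' \<rho>' (Suc i)"
proof -
  have "{\<tau>\<in>Kh'. \<tau> \<subseteq> \<rho>' ` vertices (contract u v K)} = (\<lambda>\<sigma>. \<rho>' ` \<sigma>) ` contract u v K"
    unfolding active_vertices_contract image_contract
    by (intro equalityI active_subset_contract_image contract_image_subset_active)
  then show ?thesis
    unfolding coning_invariant_def
    using simplicial_complex_contract[OF simplicial] finite_Kh' inj_on_contract stamp_Kh' by simp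
qed

text \<open>Each simplex of \<open>new_part K x y\<close> yields a simplex of \<open>\<hat>K_{i+1}\<close> not in \<open>\<hat>K_i\<close>, namely the
  image of its contraction.\<close>
lemma card_new_part_le: "card Kh + card (new_part K x y) \<le> card Kh'"
proof -
  let ?N = "new_part K x y"
  let ?h = "\<lambda>\<sigma>. \<rho> ` insert y (\<sigma> - {x})"
  have N: "\<sigma> \<in> K" "x \<in> \<sigma>" "y \<notin> \<sigma>" "insert y (\<sigma> - {x}) \<notin> K" if "\<sigma> \<in> ?N" for \<sigma>
    using that unfolding new_part_def star_diff_def by auto
  have sub: "insert y (\<sigma> - {x}) \<subseteq> vertices K" if "\<sigma> \<in> ?N" for \<sigma>
    using N[OF that] y_vertex simplex_subset_vertices by blast
  have new: "?h \<sigma> \<in> Kh' - Kh" if \<sigma>: "\<sigma> \<in> ?N" for \<sigma>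
  proof
    have "insert y (\<sigma> - {x}) = (if x \<in> \<sigma> then insert y (\<sigma> - {x}) else \<sigma>)" using N[OF \<sigma>] by simp
    then have "insert y (\<sigma> - {x}) \<in> contract y x K"
      unfolding contract_def using N(1)[OF \<sigma>] by (rule image_eqI)
    then show "?h \<sigma> \<in> Kh'" using contract_image_subset_active by blast
    show "?h \<sigma> \<notin> Kh"
    proof
      assume "?h \<sigma> \<in> Kh"
      then obtain \<sigma>' where "\<sigma>' \<in> K" "?h \<sigma> = \<rho> ` \<sigma>'"
        using sub[OF \<sigma>] coning_invariant_active_preimage[OF inv] by blast
      then show False
        using N[OF \<sigma>] sub[OF \<sigma>] coning_invariant_image_eq_iff[OF inv] simplex_subset_vertices
        by metis
    qed
  qed
  have "inj_on ?h ?N"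
  proof
    fix \<sigma>\<^sub>1 \<sigma>\<^sub>2 assume \<sigma>: "\<sigma>\<^sub>1 \<in> ?N" "\<sigma>\<^sub>2 \<in> ?N" "?h \<sigma>\<^sub>1 = ?h \<sigma>\<^sub>2"
    then have "insert y (\<sigma>\<^sub>1 - {x}) = insert y (\<sigma>\<^sub>2 - {x})"
      using coning_invariant_image_eq_iff[OF inv sub[OF \<sigma>(1)] sub[OF \<sigma>(2)]] by simp
    moreover have "\<sigma>\<^sub>k = insert x (insert y (\<sigma>\<^sub>k - {x}) - {y})" if "\<sigma>\<^sub>k \<in> ?N" for \<sigma>\<^sub>k
      using N[OF that] x_neq_y by auto
    ultimately show "\<sigma>\<^sub>1 = \<sigma>\<^sub>2" using \<sigma>(1,2) by metis
  qed
  then have "card Kh + card ?N = card Kh + card (?h ` ?N)" by (simp add: card_image)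
  also have "\<dots> = card (Kh \<union> ?h ` ?N)"
  proof (rule card_Un_disjoint[symmetric])
    show "finite (?h ` ?N)"
      using simplicial_complex_finite[OF simplicial] unfolding new_part_def star_diff_def by simp
    show "Kh \<inter> ?h ` ?N = {}" using new by blast
  qed (rule coning_invariant_finite[OF inv])
  also have "\<dots> \<le> card Kh'"
    using new finite_Kh' Kh' by (intro card_mono) auto
  finally show ?thesis .
qed

end

section \<open>The vertex removed by the algorithm\<close>

lemma small_big_cases: "small_big K u v = (x, y) \<Longrightarrow> (x = u \<and> y = v) \<or> (x = v \<and> y = u)"
  unfolding small_big_def by (auto split: if_splits)

lemma bij_betw_star_diff_minus_new_part:
  assumes "x \<noteq> y"
  shows "bij_betw (\<lambda>\<sigma>. insert y (\<sigma> - {x}))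
    (star_diff K x y - new_part K x y) (star_diff K y x - new_part K y x)"
proof (rule bij_betw_byWitness[where f' = "\<lambda>\<tau>. insert x (\<tau> - {y})"])
  have inverse: "insert b (insert a (\<sigma> - {b}) - {a}) = \<sigma>"
    if "\<sigma> \<in> star_diff K b a" "a \<noteq> b" for a b \<sigma>
    using that unfolding star_diff_def by auto
  show "\<forall>\<sigma>\<in>star_diff K x y - new_part K x y. insert x (insert y (\<sigma> - {x}) - {y}) = \<sigma>"
    using inverse assms by blast
  show "\<forall>\<tau>\<in>star_diff K y x - new_part K y x. insert y (insert x (\<tau> - {y}) - {x}) = \<tau>"
    using inverse assms by blast
  show "(\<lambda>\<sigma>. insert y (\<sigma> - {x})) ` (star_diff K x y - new_part K x y) \<subseteq> star_diff K y x - new_part K y x"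
    using inverse assms unfolding new_part_def star_diff_def by auto
  show "(\<lambda>\<tau>. insert x (\<tau> - {y})) ` (star_diff K y x - new_part K y x) \<subseteq> star_diff K x y - new_part K x y"
    using inverse assms unfolding new_part_def star_diff_def by auto
qed

lemma card_star_diff_new_part_balance:
  assumes "finite K" "x \<noteq> y"
  shows "card (star_diff K x y) + card (new_part K y x) = card (star_diff K y x) + card (new_part K x y)"
proof -
  have card_split: "card (star_diff K a b) = card (star_diff K a b - new_part K a b) + card (new_part K a b)"
    for a b
  proof -
    have "new_part K a b \<subseteq> star_diff K a b" "finite (star_diff K a b)"
      using assms(1) unfolding new_part_def star_diff_def by auto
    then show ?thesis by (metis card_Diff_subset card_mono finite_subset le_add_diff_inverse2)
  qed
  show ?thesis
    using card_split[of x y] card_split[of y x] bij_betw_same_card[OF bij_betw_star_diff_minus_new_part[OF assms(2)]]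
    by simp
qed

lemma card_new_part_small_big_le:
  assumes "finite K" "u \<noteq> v" "small_big K u v = (x, y)"
  shows "card (new_part K x y) \<le> card (new_part K y x)"
  using assms card_star_diff_new_part_balance[OF assms(1,2)] unfolding small_big_def
  by (auto split: if_splits)

lemma card_contract_swap:
  assumes "u \<noteq> v"
  shows "card (contract u v K) = card (contract v u K)"
proof -
  let ?h = "\<lambda>\<tau>. if u \<in> \<tau> then insert v (\<tau> - {u}) else \<tau>"
  have image: "contract v u K = ?h ` contract u v K"
    unfolding contract_def image_image using assms by (intro image_cong) auto
  moreover have "inj_on ?h (contract u v K)"
  proof
    fix \<tau>\<^sub>1 \<tau>\<^sub>2 assume \<tau>: "\<tau>\<^sub>1 \<in> contract u v K" "\<tau>\<^sub>2 \<in> contract u v K" "?h \<tau>\<^sub>1 = ?h \<tau>\<^sub>2"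
    have "v \<notin> \<tau>\<^sub>1" "v \<notin> \<tau>\<^sub>2" using \<tau>(1,2) assms unfolding contract_def by auto
    then show "\<tau>\<^sub>1 = \<tau>\<^sub>2" using \<tau>(3) by (auto split: if_splits)
  qed
  then have "card (?h ` contract u v K) = card (contract u v K)" by (rule card_image)
  then show ?thesis unfolding image by simp
qed

lemma card_contract_le:
  assumes sc: "simplicial_complex K" and "u \<noteq> v"
  shows "card (contract u v K) + card (cofaces K v) \<le> card K + card (new_part K v u)"
proof -
  let ?m = "\<lambda>\<sigma>. insert u (\<sigma> - {v})"
  have finite: "finite K" by (rule simplicial_complex_finite[OF sc])
  have "contract u v K \<subseteq> (K - cofaces K v) \<union> ?m ` new_part K v u"
  proof
    fix \<tau> assume "\<tau> \<in> contract u v K"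
    then obtain \<sigma> where \<sigma>: "\<sigma> \<in> K" "\<tau> = (if v \<in> \<sigma> then ?m \<sigma> else \<sigma>)"
      unfolding contract_def by blast
    consider "v \<notin> \<sigma>" | "v \<in> \<sigma>" "u \<in> \<sigma>" | "v \<in> \<sigma>" "u \<notin> \<sigma>" by blast
    then show "\<tau> \<in> (K - cofaces K v) \<union> ?m ` new_part K v u"
    proof cases
      case 2
      then have "\<tau> = \<sigma> - {v}" "\<sigma> - {v} \<in> K"
        using \<sigma> assms(2) simplicial_complex_face[OF sc \<sigma>(1), of "\<sigma> - {v}"] by auto
      then show ?thesis unfolding cofaces_def by simp
    next
      case 3
      then show ?thesis using \<sigma> unfolding cofaces_def new_part_def star_diff_def by auto
    qed (use \<sigma> in \<open>simp add: cofaces_def\<close>)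
  qed
  then have "card (contract u v K) \<le> card ((K - cofaces K v) \<union> ?m ` new_part K v u)"
    using finite unfolding new_part_def star_diff_def by (intro card_mono) auto
  also have "\<dots> \<le> card (K - cofaces K v) + card (?m ` new_part K v u)"
    by (rule card_Un_le)
  also have "\<dots> \<le> card (K - cofaces K v) + card (new_part K v u)"
    using finite unfolding new_part_def star_diff_def by (simp add: card_image_le)
  also have "card (K - cofaces K v) = card K - card (cofaces K v)"
    using finite by (intro card_Diff_subset) (auto simp: cofaces_def)
  finally show ?thesis
    using card_mono[OF finite, of "cofaces K v"] unfolding cofaces_def by auto
qed

lemma card_contract_cofaces_le:
  assumes "simplicial_complex K" "u \<noteq> v" "(x = u \<and> y = v) \<or> (x = v \<and> y = u)"
  shows "card (contract u v K) + card (cofaces K x) \<le> card K + card (new_part K x y)"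
  using assms card_contract_le card_contract_swap by metis

lemma coning_step_inclusion:
  assumes inv: "coning_invariant K Kh \<rho> i" and "elementary_op K (Inclusion \<sigma>)"
    and step: "coning_step (Kh, \<rho>) K i (Inclusion \<sigma>) = (Kh', \<rho>')"
  shows "coning_invariant (insert \<sigma> K) Kh' \<rho>' (Suc i)" and "card Kh' = Suc (card Kh)"
proof -
  have \<sigma>: "\<sigma> \<notin> K" "simplicial_complex (insert \<sigma> K)" using assms(2) by auto
  let ?\<rho>\<sigma> = "\<lambda>w. if w \<in> \<sigma> \<and> w \<notin> vertices K then (w, i) else \<rho> w"
  have Kh': "Kh' = insert (?\<rho>\<sigma> ` \<sigma>) Kh" and \<rho>': "\<rho>' = ?\<rho>\<sigma>"
    using step by (simp_all add: Let_def)
  have "coning_invariant (insert \<sigma> K) Kh' \<rho>' (Suc i) \<and> ?\<rho>\<sigma> ` \<sigma> \<notin> Kh"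
    using \<sigma>(1,2)
  proof (cases rule: elementary_inclusion_cases)
    case 1
    then have "?\<rho>\<sigma> ` \<sigma> = \<rho> ` \<sigma>" by auto
    moreover have "coning_invariant (insert \<sigma> K) (insert (\<rho> ` \<sigma>) Kh) ?\<rho>\<sigma> (Suc i)"
      by (rule coning_invariant_cong[OF coning_invariant_insert_face(1)[OF inv \<sigma> 1]])
        (use 1 in \<open>auto simp: vertices_def\<close>)
    ultimately show ?thesis using coning_invariant_insert_face(2)[OF inv \<sigma> 1] Kh' \<rho>' by simp
  next
    case (2 w)
    then have "?\<rho>\<sigma> = \<rho>(w := (w, i))" "?\<rho>\<sigma> ` \<sigma> = {(w, i)}" by auto
    then show ?thesis
      using coning_invariant_insert_vertex[OF inv 2(2)] \<sigma>(2) 2(1) Kh' \<rho>' by simp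
  qed
  then show "coning_invariant (insert \<sigma> K) Kh' \<rho>' (Suc i)" "card Kh' = Suc (card Kh)"
    using Kh' coning_invariant_finite[OF inv] by simp_all
qed

lemma coning_step_contraction:
  assumes inv: "coning_invariant K Kh \<rho> i" and uv: "elementary_op K (Contraction u v)"
    and step: "coning_step (Kh, \<rho>) K i (Contraction u v) = (Kh', \<rho>')"
    and sb: "small_big K u v = (x, y)"
  shows "coning_invariant (contract u v K) Kh' \<rho>' (Suc i)"
    and "card Kh + card (new_part K x y) \<le> card Kh'"
proof -
  let ?A = "\<rho> ` vertices K"
  have uv: "u \<noteq> v" "{u} \<in> K" "{v} \<in> K" using uv by auto
  have finite: "finite K" using coning_invariant_simplicial_complex[OF inv] by (rule simplicial_complex_finite)
  obtain a b where ab: "(a = u \<and> b = v) \<or> (a = v \<and> b = u)"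
    and Kh': "Kh' = Kh \<union> insert (\<rho> b) ` act_clstar Kh ?A (\<rho> a)"
    and \<rho>': "\<And>w. w \<in> vertices K - {v} \<Longrightarrow> \<rho>' w = (if w = u then \<rho> b else \<rho> w)"
  proof (cases "card (act_clstar Kh ?A (\<rho> u)) \<le> card (act_clstar Kh ?A (\<rho> v))")
    case True
    then have "Kh' = Kh \<union> insert (\<rho> v) ` act_clstar Kh ?A (\<rho> u)" "\<rho>' = \<rho>(u := \<rho> v)"
      using step by (auto simp: Let_def setcompr_eq_image)
    then show ?thesis using that[of u v] by simp
  next
    case False
    then have "Kh' = Kh \<union> insert (\<rho> u) ` act_clstar Kh ?A (\<rho> v)" "\<rho>' = \<rho>"
      using step by (auto simp: Let_def setcompr_eq_image)
    then show ?thesis using that[of v u] by simp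
  qed
  then interpret coning_contraction K Kh Kh' \<rho> \<rho>' i u v a b
    using inv uv by unfold_locales
  show "coning_invariant (contract u v K) Kh' \<rho>' (Suc i)" by (rule coning_invariant_contract)
  have "card (new_part K x y) \<le> card (new_part K a b)"
    using ab small_big_cases[OF sb] card_new_part_small_big_le[OF finite uv(1) sb] by auto
  then show "card Kh + card (new_part K x y) \<le> card Kh'" using card_new_part_le by simp
qed

lemma coning_invariant_cplx:
  assumes valid: "valid_tower ops" and "n \<le> length ops"
  shows "coning_invariant (cplx ops n) (fst (coning ops n)) (snd (coning ops n)) n"
  using assms(2)
proof (induction n)
  case 0
  then show ?case by (simp add: coning_invariant_def simplicial_complex_def vertices_def)
next
  case (Suc i)
  then have inv: "coning_invariant (cplx ops i) (fst (coning ops i)) (snd (coning ops i)) i"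
    and el: "elementary_op (cplx ops i) (ops ! i)"
    using valid unfolding valid_tower_def by auto
  obtain Kh \<rho> Kh' \<rho>' where "coning ops i = (Kh, \<rho>)" "coning ops (Suc i) = (Kh', \<rho>')"
    by (meson surj_pair)
  then show ?case
    using inv el coning_step_inclusion(1) coning_step_contraction(1)[OF _ _ _ surjective_pairing]
    by (cases "ops ! i") (auto simp del: coning_step.simps)
qed

lemma coning_Suc_eq_step:
  "coning_step (fst (coning ops i), snd (coning ops i)) (cplx ops i) i (ops ! i)
    = (fst (coning ops (Suc i)), snd (coning ops (Suc i)))"
  by simp

lemma card_coning_Suc_inclusion:
  assumes valid: "valid_tower ops" and i: "i < length ops" and op: "ops ! i = Inclusion \<sigma>"
  shows "card (fst (coning ops (Suc i))) = Suc (card (fst (coning ops i)))"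
  using coning_step_inclusion(2)[OF coning_invariant_cplx[OF valid] _ coning_Suc_eq_step[of ops i, unfolded op]]
    valid i op unfolding valid_tower_def by (metis less_imp_le)

lemma card_coning_Suc_contraction:
  assumes valid: "valid_tower ops" and i: "i < length ops" and op: "ops ! i = Contraction u v"
    and sb: "small_big (cplx ops i) u v = (x, y)"
  shows "card (fst (coning ops i)) + card (new_part (cplx ops i) x y) \<le> card (fst (coning ops (Suc i)))"
  using coning_step_contraction(2)[OF coning_invariant_cplx[OF valid] _ coning_Suc_eq_step[of ops i, unfolded op] sb]
    valid i op unfolding valid_tower_def by (metis less_imp_le)

section \<open>The cost of one step\<close>

lemma card_facets_le:
  assumes "finite \<tau>"
  shows "card {\<sigma>\<in>S. \<sigma> \<subseteq> \<tau> \<and> card \<tau> = Suc (card \<sigma>)} \<le> card \<tau>"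
proof -
  have "{\<sigma>\<in>S. \<sigma> \<subseteq> \<tau> \<and> card \<tau> = Suc (card \<sigma>)} \<subseteq> (\<lambda>w. \<tau> - {w}) ` \<tau>"
  proof
    fix \<sigma> assume "\<sigma> \<in> {\<sigma>\<in>S. \<sigma> \<subseteq> \<tau> \<and> card \<tau> = Suc (card \<sigma>)}"
    then have \<sigma>: "\<sigma> \<subseteq> \<tau>" "card \<tau> = Suc (card \<sigma>)" by auto
    then have "card (\<tau> - \<sigma>) = 1" using assms by (simp add: card_Diff_subset finite_subset)
    then obtain w where "\<tau> - \<sigma> = {w}" by (rule card_1_singletonE)
    then show "\<sigma> \<in> (\<lambda>w. \<tau> - {w}) ` \<tau>" using \<sigma>(1) by blast
  qed
  then have "card {\<sigma>\<in>S. \<sigma> \<subseteq> \<tau> \<and> card \<tau> = Suc (card \<sigma>)} \<le> card ((\<lambda>w. \<tau> - {w}) ` \<tau>)"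
    using assms by (intro card_mono) auto
  also have "\<dots> \<le> card \<tau>" using assms by (rule card_image_le)
  finally show ?thesis .
qed

text \<open>Double counting: the cofacet entries of \<open>S\<close> are counted from the side of the cofacets,
  each of which has at most \<open>D\<close> facets.\<close>
lemma entries_le:
  assumes "finite K" "finite S" and dim: "\<forall>\<tau>\<in>K. finite \<tau> \<and> card \<tau> \<le> D" and "T \<subseteq> K"
    and cofacets: "\<And>\<sigma> \<tau>. \<sigma> \<in> S \<Longrightarrow> \<tau> \<in> K \<Longrightarrow> \<sigma> \<subseteq> \<tau> \<Longrightarrow> card \<tau> = Suc (card \<sigma>) \<Longrightarrow> \<tau> \<in> T"
  shows "entries K S \<le> D * card T"
proof -
  let ?R = "\<lambda>\<sigma> \<tau>. \<sigma> \<subseteq> \<tau> \<and> card \<tau> = Suc (card \<sigma>)"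
  have "entries K S = (\<Sum>\<sigma>\<in>S. \<Sum>\<tau>\<in>{\<tau>. \<tau> \<in> K \<and> ?R \<sigma> \<tau>}. 1)"
    unfolding entries_def cof_count_def by simp
  also have "\<dots> = (\<Sum>\<tau>\<in>K. \<Sum>\<sigma>\<in>{\<sigma>. \<sigma> \<in> S \<and> ?R \<sigma> \<tau>}. 1)"
    by (rule sum.swap_restrict[OF assms(2,1)])
  also have "\<dots> = (\<Sum>\<tau>\<in>K. card {\<sigma>\<in>S. ?R \<sigma> \<tau>})" by simp
  also have "\<dots> = (\<Sum>\<tau>\<in>T. card {\<sigma>\<in>S. ?R \<sigma> \<tau>})"
  proof (intro sum.mono_neutral_right[OF assms(1,4)] ballI)
    fix \<tau> assume "\<tau> \<in> K - T"
    then have "{\<sigma>\<in>S. ?R \<sigma> \<tau>} = {}" using cofacets by blast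
    then show "card {\<sigma>\<in>S. ?R \<sigma> \<tau>} = 0" by (simp only: card.empty)
  qed
  also have "\<dots> \<le> (\<Sum>\<tau>\<in>T. D)"
  proof (rule sum_mono)
    fix \<tau> assume "\<tau> \<in> T"
    then have "finite \<tau>" "card \<tau> \<le> D" using dim \<open>T \<subseteq> K\<close> by auto
    then show "card {\<sigma>\<in>S. ?R \<sigma> \<tau>} \<le> D" using card_facets_le[of \<tau> S] by linarith
  qed
  finally show ?thesis by (simp add: mult.commute)
qed

lemma dspace_le:
  assumes "finite K" and dim: "\<forall>\<tau>\<in>K. finite \<tau> \<and> card \<tau> \<le> D"
  shows "dspace K \<le> (2 * D + 1) * card K"
proof -
  have "dspace K = (\<Sum>\<sigma>\<in>K. card \<sigma>) + card K + entries K K"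
    unfolding dspace_def entries_def by (simp only: sum.distrib) simp
  moreover have "(\<Sum>\<sigma>\<in>K. card \<sigma>) \<le> D * card K"
    using dim sum_bounded_above[of K card D] by (simp add: mult.commute)
  moreover have "entries K K \<le> D * card K" using assms by (intro entries_le) auto
  ultimately show ?thesis by (simp add: algebra_simps)
qed

context
  fixes K :: "nat set set" and D u v x y :: nat
  assumes sc: "simplicial_complex K" and dim: "\<forall>\<tau>\<in>K. card \<tau> \<le> D"
    and uv: "u \<noteq> v" "{u} \<in> K" "{v} \<in> K" and sb: "small_big K u v = (x, y)"
begin

private lemma finite_dim: "\<forall>\<tau>\<in>K. finite \<tau> \<and> card \<tau> \<le> D"
  using dim simplicial_complex_simplex_finite[OF sc] by blast

private lemma subsets:
  "new_part K x y \<subseteq> star_diff K x y" "star_diff K x y \<subseteq> cofaces K x" "cofaces K x \<subseteq> K"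
  unfolding new_part_def star_diff_def cofaces_def by auto

private lemma finite_cofaces: "finite (cofaces K x)"
  using simplicial_complex_finite[OF sc] subsets(3) by (rule finite_subset[rotated])

private lemma card_le_cofaces: "A \<subseteq> cofaces K x \<Longrightarrow> card A \<le> card (cofaces K x)"
  using finite_cofaces by (rule card_mono)

private lemma sum_card_le: "A \<subseteq> K \<Longrightarrow> (\<Sum>\<sigma>\<in>A. card \<sigma>) \<le> D * card A"
  using dim sum_bounded_above[of A card D] by (auto simp: mult.commute)

private lemma sum_card_le_cofaces: "A \<subseteq> cofaces K x \<Longrightarrow> (\<Sum>\<sigma>\<in>A. card \<sigma>) \<le> D * card (cofaces K x)"
  using sum_card_le card_le_cofaces subsets(3) by (meson mult_le_mono2 order_trans)

private lemma entries_le_cofaces: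
  "A \<subseteq> cofaces K x \<Longrightarrow> entries K A \<le> D * card (cofaces K x)"
  using simplicial_complex_finite[OF sc] finite_cofaces finite_dim subsets(3)
  by (intro entries_le) (auto simp: cofaces_def intro: finite_subset)

private lemma one_le: "1 \<le> D" "1 \<le> card (cofaces K x)"
proof -
  have "{x} \<in> cofaces K x" using small_big_cases[OF sb] uv unfolding cofaces_def by auto
  then show "1 \<le> card (cofaces K x)" using finite_cofaces by (auto simp: Suc_le_eq card_gt_0_iff)
  show "1 \<le> D" using dim \<open>{x} \<in> cofaces K x\<close> subsets(3) by fastforce
qed

private lemma le_D_card_cofaces:
  "1 \<le> D * card (cofaces K x)" "D \<le> D * card (cofaces K x)" "card (cofaces K x) \<le> D * card (cofaces K x)"
  using one_le by auto

lemma step_elem_contraction_le: "step_elem K (Contraction u v) \<le> 12 * (D * card (cofaces K x))"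
proof -
  let ?S = "star_diff K x y" and ?N = "new_part K x y" and ?F = "cofaces K x"
  have "step_elem K (Contraction u v) = 2 + 2 * entries K ?S + (card ?S + Max (insert 0 (card ` ?S)))
      + (\<Sum>\<sigma>\<in>?N. card \<sigma>) + (\<Sum>\<sigma>\<in>?S. card \<sigma> + 1) + entries K ?F + 1"
    using sb by (simp add: Let_def)
  moreover have "(\<Sum>\<sigma>\<in>?S. card \<sigma> + 1) = (\<Sum>\<sigma>\<in>?S. card \<sigma>) + card ?S"
    by (simp only: sum.distrib) simp
  moreover have "Max (insert 0 (card ` ?S)) \<le> D"
    using dim subsets finite_cofaces by (intro Max.boundedI) (auto intro: finite_subset)
  ultimately show ?thesis
    using entries_le_cofaces[OF subsets(2)] entries_le_cofaces[OF order_refl]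
      sum_card_le_cofaces[OF subsets(2)] sum_card_le_cofaces[OF subset_trans[OF subsets(1,2)]]
      card_le_cofaces[OF subsets(2)] le_D_card_cofaces
    by linarith
qed

lemma step_dict_contraction_le: "step_dict K (Contraction u v) \<le> 15 * (D * card (cofaces K x))"
proof -
  let ?S = "star_diff K x y" and ?N = "new_part K x y" and ?F = "cofaces K x"
  have sum_le: "(\<Sum>\<sigma>\<in>A. 1 + 2 * card \<sigma>) \<le> 2 * (D * card ?F) + card ?F" if "A \<subseteq> ?F" for A
  proof -
    have "(\<Sum>\<sigma>\<in>A. 1 + 2 * card \<sigma>) = card A + 2 * (\<Sum>\<sigma>\<in>A. card \<sigma>)"
      by (simp only: sum.distrib sum_distrib_left[symmetric]) simp
    then show ?thesis using sum_card_le_cofaces[OF that] card_le_cofaces[OF that] by linarith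
  qed
  have "step_dict K (Contraction u v) = 2 + 4 * entries K ?S + card ?S + (\<Sum>\<sigma>\<in>?N. 1 + 2 * card \<sigma>)
      + 2 * entries K ?F + (\<Sum>\<sigma>\<in>?F. 1 + 2 * card \<sigma>)"
    using sb by (simp add: Let_def)
  then show ?thesis
    using entries_le_cofaces[OF subsets(2)] entries_le_cofaces[OF order_refl]
      card_le_cofaces[OF subsets(2)] sum_le[OF subset_trans[OF subsets(1,2)]] sum_le[OF order_refl]
      le_D_card_cofaces
    by linarith
qed

lemma step_space_contraction_le: "step_space K (Contraction u v) \<le> 9 * (D * card K)"
proof -
  let ?S = "star_diff K x y" and ?N = "new_part K x y"
  let ?K' = "K \<union> (\<lambda>\<sigma>. insert y (\<sigma> - {x})) ` ?N"
  have finite: "finite K" by (rule simplicial_complex_finite[OF sc])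
  have finite_N: "finite ?N" using finite_cofaces subsets by (meson finite_subset)
  have "card (insert y (\<sigma> - {x})) = card \<sigma>" "finite (insert y (\<sigma> - {x}))" if "\<sigma> \<in> ?N" for \<sigma>
  proof -
    have "\<sigma> \<in> K" "x \<in> \<sigma>" "y \<notin> \<sigma>" using that unfolding new_part_def star_diff_def by auto
    then show "card (insert y (\<sigma> - {x})) = card \<sigma>" "finite (insert y (\<sigma> - {x}))"
      using finite_dim card_Suc_Diff1[of \<sigma> x] by auto
  qed
  then have "\<forall>\<tau>\<in>?K'. finite \<tau> \<and> card \<tau> \<le> D" using finite_dim subsets by fastforce
  then have "dspace ?K' \<le> (2 * D + 1) * card ?K'"
    using finite finite_N by (intro dspace_le) auto
  also have "\<dots> \<le> (2 * D + 1) * (2 * card K)"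
  proof (intro mult_le_mono2)
    have "card ?K' \<le> card K + card ?N"
      using card_Un_le card_image_le[OF finite_N] by (metis add_left_mono order_trans)
    also have "card ?N \<le> card K" using finite subsets by (meson card_mono order_trans)
    finally show "card ?K' \<le> 2 * card K" by simp
  qed
  finally have "dspace ?K' \<le> 4 * (D * card K) + 2 * card K" by (simp add: algebra_simps)
  moreover have "(\<Sum>\<sigma>\<in>?S. card \<sigma> + 1) \<le> D * card K + card K"
  proof -
    have "(\<Sum>\<sigma>\<in>?S. card \<sigma> + 1) = (\<Sum>\<sigma>\<in>?S. card \<sigma>) + card ?S" by (simp only: sum.distrib) simp
    moreover have "card ?S \<le> card K" using finite subsets by (meson card_mono order_trans)
    moreover have "(\<Sum>\<sigma>\<in>?S. card \<sigma>) \<le> D * card ?S" using subsets by (intro sum_card_le) auto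
    ultimately show ?thesis using mult_le_mono2[of "card ?S" "card K" D] by linarith
  qed
  moreover have "step_space K (Contraction u v) = dspace ?K' + card K + (\<Sum>\<sigma>\<in>?S. card \<sigma> + 1)"
    using sb by (simp add: Let_def)
  moreover have "card K \<le> D * card K" using one_le(1) by simp
  ultimately show ?thesis by linarith
qed

end

section \<open>Space and time of the conversion\<close>

lemma card_simplex_le_tower_dim:
  assumes valid: "valid_tower ops" and "i \<le> length ops" "\<sigma> \<in> cplx ops i"
  shows "card \<sigma> \<le> tower_dim ops + 1"
proof -
  let ?dims = "{card \<sigma> - 1 | \<sigma> i. i \<le> length ops \<and> \<sigma> \<in> cplx ops i}"
  have "?dims \<subseteq> (\<Union>j\<le>length ops. (\<lambda>\<sigma>. card \<sigma> - 1) ` cplx ops j)" by auto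
  moreover have "finite (\<Union>j\<le>length ops. (\<lambda>\<sigma>. card \<sigma> - 1) ` cplx ops j)"
    using simplicial_complex_finite[OF simplicial_complex_cplx[OF valid]] by simp
  ultimately have "finite ({0} \<union> ?dims)" by (simp add: finite_subset)
  moreover have "card \<sigma> - 1 \<in> {0} \<union> ?dims" using assms(2,3) by blast
  ultimately have "card \<sigma> - 1 \<le> Max ({0} \<union> ?dims)" by (rule Max_ge)
  then show ?thesis unfolding tower_dim_def by linarith
qed

lemma card_cplx_le_tower_width: "i \<le> length ops \<Longrightarrow> card (cplx ops i) \<le> tower_width ops"
  unfolding tower_width_def by (rule Max_ge) auto

lemma step_space_le:
  assumes valid: "valid_tower ops" and i: "i < length ops"
  shows "step_space (cplx ops i) (ops ! i) \<le> 9 * ((tower_dim ops + 1) * tower_width ops)"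
proof -
  let ?D = "tower_dim ops + 1" and ?K = "cplx ops i"
  have sc: "simplicial_complex ?K" using simplicial_complex_cplx[OF valid] i by simp
  have el: "elementary_op ?K (ops ! i)" using valid i unfolding valid_tower_def by simp
  have dim: "\<forall>\<tau>\<in>cplx ops j. card \<tau> \<le> ?D" if "j \<le> length ops" for j
    using card_simplex_le_tower_dim[OF valid that] by blast
  show ?thesis
  proof (cases "ops ! i")
    case (Inclusion \<sigma>)
    then have K': "cplx ops (Suc i) = insert \<sigma> ?K" and sc': "simplicial_complex (insert \<sigma> ?K)"
      using el by auto
    have "step_space ?K (ops ! i) \<le> (2 * ?D + 1) * card (insert \<sigma> ?K)"
      unfolding Inclusion step_space.simps
      using simplicial_complex_finite[OF sc'] simplicial_complex_simplex_finite[OF sc'] dim[of "Suc i"] i K'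
      by (intro dspace_le) auto
    also have "\<dots> \<le> (2 * ?D + 1) * tower_width ops"
      using card_cplx_le_tower_width[of "Suc i" ops] i K' by (intro mult_le_mono2) simp
    finally show ?thesis by (simp add: algebra_simps)
  next
    case (Contraction u v)
    obtain x y where sb: "small_big ?K u v = (x, y)" by (meson surj_pair)
    have "step_space ?K (Contraction u v) \<le> 9 * (?D * card ?K)"
      using step_space_contraction_le[OF sc dim[of i] _ _ _ sb] el i Contraction by simp
    also have "\<dots> \<le> 9 * (?D * tower_width ops)"
      using card_cplx_le_tower_width[of i ops] i by (intro mult_le_mono2) simp
    finally show ?thesis using Contraction by simp
  qed
qed

lemma alg_space_le:
  assumes "valid_tower ops"
  shows "alg_space ops \<le> 9 * ((tower_dim ops + 1) * tower_width ops)"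
  unfolding alg_space_def using step_space_le[OF assms] by (intro Max.boundedI) auto

lemma weighted_cost_le:
  fixes e d a b n :: nat and C :: real
  assumes "e \<le> a * n" "d \<le> b * n" "1 \<le> C"
  shows "real e + C * real d \<le> C * real n * real (a + b)"
proof -
  have "real e \<le> real (a * n)" using assms(1) by (rule of_nat_mono)
  also have "\<dots> \<le> C * real (a * n)" using mult_right_mono[OF assms(3), of "real (a * n)"] by simp
  finally have "real e \<le> C * real (a * n)" .
  moreover have "C * real d \<le> C * real (b * n)"
    using of_nat_mono[OF assms(2)] assms(3) by (intro mult_left_mono) simp_all
  ultimately show ?thesis by (simp add: algebra_simps)
qed

definition coning_potential :: "tower_op list \<Rightarrow> nat \<Rightarrow> real" where
  "coning_potential ops i = 34 * real (card (fst (coning ops i))) - 27 * real (card (cplx ops i))"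

lemma coning_potential_increase_inclusion:
  assumes valid: "valid_tower ops" and i: "i < length ops" and op: "ops ! i = Inclusion \<sigma>"
  shows "coning_potential ops (Suc i) - coning_potential ops i = 7"
proof -
  have "elementary_op (cplx ops i) (Inclusion \<sigma>)" using valid i op unfolding valid_tower_def by metis
  then have "card (cplx ops (Suc i)) = Suc (card (cplx ops i))"
    using op simplicial_complex_finite[OF simplicial_complex_cplx[OF valid]] i by simp
  then show ?thesis
    using card_coning_Suc_inclusion[OF valid i op]
    unfolding coning_potential_def by (simp del: coning.simps cplx.simps)
qed

lemma coning_potential_increase_contraction:
  assumes valid: "valid_tower ops" and i: "i < length ops" and op: "ops ! i = Contraction u v"
    and sb: "small_big (cplx ops i) u v = (x, y)"
  shows "27 * real (card (cofaces (cplx ops i) x)) \<le> coning_potential ops (Suc i) - coning_potential ops i"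
proof -
  let ?K = "cplx ops i"
  have "simplicial_complex ?K" using simplicial_complex_cplx[OF valid] i by simp
  moreover have "elementary_op ?K (Contraction u v)" using valid i op unfolding valid_tower_def by metis
  then have "u \<noteq> v" by simp
  ultimately have "card (cplx ops (Suc i)) + card (cofaces ?K x) \<le> card ?K + card (new_part ?K x y)"
    using card_contract_cofaces_le small_big_cases[OF sb] op by simp
  moreover have "card (fst (coning ops i)) + card (new_part ?K x y) \<le> card (fst (coning ops (Suc i)))"
    by (rule card_coning_Suc_contraction[OF valid i op sb])
  ultimately show ?thesis
    unfolding coning_potential_def by (simp add: algebra_simps del: coning.simps cplx.simps)
qed

lemma step_time_le_potential_increase:
  assumes valid: "valid_tower ops" and i: "i < length ops" and C: "C \<ge> 1"
  shows "real (step_elem (cplx ops i) (ops ! i)) + C * real (step_dict (cplx ops i) (ops ! i))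
    \<le> C * real (tower_dim ops + 1) * (coning_potential ops (Suc i) - coning_potential ops i)"
proof -
  let ?D = "tower_dim ops + 1" and ?K = "cplx ops i"
  have el: "elementary_op ?K (ops ! i)" using valid i unfolding valid_tower_def by simp
  have dim: "\<forall>\<tau>\<in>cplx ops j. card \<tau> \<le> ?D" if "j \<le> length ops" for j
    using card_simplex_le_tower_dim[OF valid that] by blast
  show ?thesis
  proof (cases "ops ! i")
    case (Inclusion \<sigma>)
    then have "card \<sigma> \<le> ?D" using dim[of "Suc i"] i by simp
    then have "real (step_elem ?K (ops ! i)) + C * real (step_dict ?K (ops ! i)) \<le> C * real ?D * real (3 + 4)"
      using Inclusion C by (intro weighted_cost_le) auto
    then show ?thesis using coning_potential_increase_inclusion[OF valid i Inclusion] by simp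
  next
    case (Contraction u v)
    obtain x y where sb: "small_big ?K u v = (x, y)" by (meson surj_pair)
    have sc: "simplicial_complex ?K" using simplicial_complex_cplx[OF valid] i by simp
    have uv: "u \<noteq> v" "{u} \<in> ?K" "{v} \<in> ?K" using el Contraction by auto
    have "real (step_elem ?K (ops ! i)) + C * real (step_dict ?K (ops ! i))
        \<le> C * real (?D * card (cofaces ?K x)) * real (12 + 15)"
      using step_elem_contraction_le[OF sc dim[of i] uv sb] step_dict_contraction_le[OF sc dim[of i] uv sb]
        Contraction C i by (intro weighted_cost_le) (auto simp: mult.assoc)
    also have "\<dots> = C * real ?D * (27 * real (card (cofaces ?K x)))" by (simp add: algebra_simps)
    also have "\<dots> \<le> C * real ?D * (coning_potential ops (Suc i) - coning_potential ops i)"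
      using coning_potential_increase_contraction[OF valid i Contraction sb] C
      by (intro mult_left_mono) auto
    finally show ?thesis .
  qed
qed

lemma alg_time_le:
  assumes valid: "valid_tower ops" and C: "C \<ge> 1"
  shows "alg_time C ops \<le> 34 * C * real (tower_dim ops + 1) * real (card (khat_last ops))"
proof -
  let ?E = "C * real (tower_dim ops + 1)"
  have "alg_time C ops \<le> (\<Sum>i<length ops. ?E * (coning_potential ops (Suc i) - coning_potential ops i))"
    unfolding alg_time_def using step_time_le_potential_increase[OF valid _ C] by (intro sum_mono) simp
  also have "\<dots> = ?E * coning_potential ops (length ops)"
    unfolding sum_distrib_left[symmetric] sum_lessThan_telescope by (simp add: coning_potential_def)
  also have "\<dots> \<le> ?E * (34 * real (card (khat_last ops)))"
    using C unfolding coning_potential_def khat_last_def by (intro mult_left_mono) auto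
  finally show ?thesis by (simp add: algebra_simps)
qed

theorem proposition13:
  "\<exists>c :: real. c > 0 \<and>
     (\<forall>ops (C :: real). valid_tower ops \<longrightarrow> C \<ge> 1 \<longrightarrow>
        real (alg_space ops) \<le> c * real (tower_dim ops + 1) * real (tower_width ops) \<and>
        alg_time C ops \<le> c * real (tower_dim ops + 1) * real (card (khat_last ops)) * C)"
proof (intro exI[of _ 34] conjI allI impI)
  fix ops and C :: real
  assume valid: "valid_tower ops" and C: "C \<ge> 1"
  let ?D = "real (tower_dim ops + 1)" and ?w = "real (tower_width ops)"
  have "real (alg_space ops) \<le> real (9 * ((tower_dim ops + 1) * tower_width ops))"
    using alg_space_le[OF valid] by (rule of_nat_mono)
  also have "\<dots> \<le> real (34 * ((tower_dim ops + 1) * tower_width ops))" by (rule of_nat_mono) simp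
  also have "\<dots> = 34 * ?D * ?w" by (simp add: algebra_simps)
  finally show "real (alg_space ops) \<le> 34 * ?D * ?w" .
  show "alg_time C ops \<le> 34 * ?D * real (card (khat_last ops)) * C"
    using alg_time_le[OF valid C] by (simp add: algebra_simps)
qed simp

end
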